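(* Let $\operatorname{P}\in\operatorname{MM}(A,\theta,S)$, $E\subset\mathbb{Y}$, and let $\theta_i$ with $i\in S_j$ be varied to $\tilde\theta_i$. If $0\le |A_{y,S_j}|\le 1$ for all $y\in E$, then for any linear $\tilde\theta_i$-covariation scheme $\sigma$ the sensitivity function $\sigma(\operatorname{P})(E)$ is a linear (affine) function of $\tilde\theta_i$.
   Context: Let $\mathbb{Y}$ be a finite set with $q$ elements. A monomial model $\operatorname{MM}(A,\theta,S)$ is given by $A\in\mathcal{M}_{q\times k}(\mathbb{Z}_{\ge0})$ with rows $A_y$, parameters $\theta\in\mathbb{R}^k_{>0}$, and a partition $S=\{S_1,\dots,S_n\}$ of $[k]$ with each block $(\theta_l)_{l\in S_m}$ in the open probability simplex; $\operatorname{P}(y)=\prod_l\theta_l^{A_{y,l}}$, a probability distribution for every such parameter; $\operatorname{P}(E)=\sum_{y\in E}\operatorname{P}(y)$; $|A_{y,S_j}|=\sum_{l\in S_j}A_{y,l}$; $S_j^{-i}=S_j\setminus\{i\}$. A linear $\tilde\theta_i$-covariation scheme $\sigma$ sets $\theta_i$ to $\tilde\theta_i\in(0,1)$, sets $\tilde\theta_k=\gamma_k\tilde\theta_i+\delta_k$ for $k\in S_j^{-i}$ with constants chosen so the block $S_j$ sums to one, and leaves $\theta_l$, $l\notin S_j$, unchanged; $\sigma(\operatorname{P})(y)=\tilde\theta^{A_y}$ (proportional and uniform covariation are special cases). *)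

theory Defs
  imports Main Complex_Main
begin

definition is_partition :: "nat \<Rightarrow> nat set set \<Rightarrow> bool" where
  "is_partition k S \<longleftrightarrow> \<Union>S = {..<k} \<and> {} \<notin> S \<and>
     (\<forall>B\<in>S. \<forall>C\<in>S. B \<noteq> C \<longrightarrow> B \<inter> C = {})"

definition valid_params :: "nat \<Rightarrow> nat set set \<Rightarrow> (nat \<Rightarrow> real) \<Rightarrow> bool" where
  "valid_params k S \<theta> \<longleftrightarrow> (\<forall>l<k. \<theta> l > 0) \<and> (\<forall>B\<in>S. sum \<theta> B = 1)"

definition mono_prob :: "nat \<Rightarrow> ('y \<Rightarrow> nat \<Rightarrow> nat) \<Rightarrow> (nat \<Rightarrow> real) \<Rightarrow> 'y \<Rightarrow> real" where
  "mono_prob k A \<theta> y = (\<Prod>l<k. \<theta> l ^ A y l)"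

definition mono_event_prob :: "nat \<Rightarrow> ('y \<Rightarrow> nat \<Rightarrow> nat) \<Rightarrow> (nat \<Rightarrow> real) \<Rightarrow> 'y set \<Rightarrow> real" where
  "mono_event_prob k A \<theta> E = (\<Sum>y\<in>E. mono_prob k A \<theta> y)"

text \<open>P \<in> MM(A,theta,S) over the finite outcome set Y: partition, valid parameter,
  and P is a probability distribution on Y for every admissible parameter.\<close>
definition monomial_model :: "'y set \<Rightarrow> nat \<Rightarrow> ('y \<Rightarrow> nat \<Rightarrow> nat) \<Rightarrow> (nat \<Rightarrow> real) \<Rightarrow> nat set set \<Rightarrow> bool" where
  "monomial_model Y k A \<theta> S \<longleftrightarrow> finite Y \<and> Y \<noteq> {} \<and> is_partition k S \<and> valid_params k S \<theta> \<and>
     (\<forall>\<theta>'. valid_params k S \<theta>' \<longrightarrow> mono_event_prob k A \<theta>' Y = 1)"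

definition lin_cov :: "(nat \<Rightarrow> real) \<Rightarrow> nat set \<Rightarrow> nat \<Rightarrow> (nat \<Rightarrow> real) \<Rightarrow> (nat \<Rightarrow> real) \<Rightarrow> real \<Rightarrow> nat \<Rightarrow> real" where
  "lin_cov \<theta> Sj i \<gamma> \<delta> t l =
     (if l = i then t else if l \<in> Sj then \<gamma> l * t + \<delta> l else \<theta> l)"

definition lin_cov_scheme :: "(nat \<Rightarrow> real) \<Rightarrow> nat set \<Rightarrow> nat \<Rightarrow> (nat \<Rightarrow> real) \<Rightarrow> (nat \<Rightarrow> real) \<Rightarrow> bool" where
  "lin_cov_scheme \<theta> Sj i \<gamma> \<delta> \<longleftrightarrow> i \<in> Sj \<and>
     (\<forall>t\<in>{0<..<1}. sum (lin_cov \<theta> Sj i \<gamma> \<delta> t) Sj = 1)"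

end

theory Submission
  imports Defs
begin

text \<open>Under a linear covariation every parameter is an affine function of the new
  value t, and only the parameters of the block S_j depend on t. If an outcome has total degree
  at most one in that block, its monomial contains at most one t-dependent factor, and that
  factor occurs to the first power; hence every such monomial, and the sum of them over E,
  is affine in t.\<close>

definition affine_fun :: "(real \<Rightarrow> real) \<Rightarrow> bool" where
  "affine_fun f \<longleftrightarrow> (\<exists>a b. \<forall>t. f t = a * t + b)"

lemma affine_fun_const: "affine_fun (\<lambda>t. c)"
  unfolding affine_fun_def by (metis mult_zero_left add_0)

lemma affine_fun_mult_const:
  assumes "affine_fun f"
  shows "affine_fun (\<lambda>t. f t * c)"
proof -
  obtain a b where "\<And>t. f t = a * t + b" using assms unfolding affine_fun_def by blast
  then have "\<And>t. f t * c = (a * c) * t + b * c" by (simp add: algebra_simps)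
  then show ?thesis unfolding affine_fun_def by blast
qed

lemma affine_fun_sum:
  assumes "\<And>x. x \<in> I \<Longrightarrow> affine_fun (f x)"
  shows "affine_fun (\<lambda>t. \<Sum>x\<in>I. f x t)"
proof -
  obtain a b where "\<And>x t. x \<in> I \<Longrightarrow> f x t = a x * t + b x"
    using assms unfolding affine_fun_def by metis
  then have "\<And>t. (\<Sum>x\<in>I. f x t) = (\<Sum>x\<in>I. a x) * t + (\<Sum>x\<in>I. b x)"
    by (simp add: sum.distrib sum_distrib_right)
  then show ?thesis unfolding affine_fun_def by blast
qed

lemma affine_fun_prod_power:
  fixes n :: "'a \<Rightarrow> nat"
  assumes "finite I" and "(\<Sum>l\<in>I. n l) \<le> 1" and "\<And>l. l \<in> I \<Longrightarrow> affine_fun (f l)"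
  shows "affine_fun (\<lambda>t. \<Prod>l\<in>I. f l t ^ n l)"
proof (cases "(\<Sum>l\<in>I. n l) = 0")
  case True
  then have "\<forall>l\<in>I. n l = 0" using \<open>finite I\<close> by simp
  then show ?thesis by (simp add: affine_fun_const)
next
  case False
  then have "(\<Sum>l\<in>I. n l) = 1" using assms(2) by simp
  then obtain l0 where l0: "l0 \<in> I" "n l0 = 1" and others: "\<forall>l\<in>I. l0 \<noteq> l \<longrightarrow> n l = 0"
    using sum_eq_1_iff[OF \<open>finite I\<close>] by blast
  have "(\<Prod>l\<in>I. f l t ^ n l) = f l0 t" for t
  proof -
    have "(\<Prod>l\<in>I. f l t ^ n l) = f l0 t ^ n l0 * (\<Prod>l\<in>I - {l0}. f l t ^ n l)"
      using \<open>finite I\<close> l0(1) by (simp add: prod.remove)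
    also have "(\<Prod>l\<in>I - {l0}. f l t ^ n l) = 1"
      using others by (intro prod.neutral) auto
    finally show ?thesis using l0(2) by simp
  qed
  then show ?thesis using assms(3)[OF l0(1)] by simp
qed

lemma affine_fun_mono_prob:
  assumes "finite B" and "(\<Sum>l\<in>B. A y l) \<le> 1"
    and "\<And>l. l \<in> B \<Longrightarrow> affine_fun (\<lambda>t. \<theta> t l)"
    and "\<And>l t. l \<notin> B \<Longrightarrow> \<theta> t l = \<theta>\<^sub>0 l"
  shows "affine_fun (\<lambda>t. mono_prob k A (\<theta> t) y)"
proof -
  have split: "mono_prob k A (\<theta> t) y
      = (\<Prod>l\<in>{..<k} \<inter> B. \<theta> t l ^ A y l) * (\<Prod>l\<in>{..<k} - B. \<theta>\<^sub>0 l ^ A y l)" for t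
    unfolding mono_prob_def prod.Int_Diff[OF finite_lessThan, of _ _ B] using assms(4) by simp
  have "(\<Sum>l\<in>{..<k} \<inter> B. A y l) \<le> (\<Sum>l\<in>B. A y l)"
    using \<open>finite B\<close> by (intro sum_mono2) auto
  then have "affine_fun (\<lambda>t. \<Prod>l\<in>{..<k} \<inter> B. \<theta> t l ^ A y l)"
    using assms(2,3) by (intro affine_fun_prod_power) auto
  then show ?thesis unfolding split by (rule affine_fun_mult_const)
qed

lemma affine_fun_lin_cov: "affine_fun (\<lambda>t. lin_cov \<theta> Sj i \<gamma> \<delta> t l)"
  unfolding affine_fun_def lin_cov_def
  by (cases "l = i"; cases "l \<in> Sj") (auto intro: exI[of _ 0] exI[of _ 1])

lemma lin_cov_outside_block: "i \<in> Sj \<Longrightarrow> l \<notin> Sj \<Longrightarrow> lin_cov \<theta> Sj i \<gamma> \<delta> t l = \<theta> l"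
  unfolding lin_cov_def by auto

theorem corollary2:
  fixes Y E :: "'y set" and k :: nat and A :: "'y \<Rightarrow> nat \<Rightarrow> nat"
    and \<theta> \<gamma> \<delta> :: "nat \<Rightarrow> real" and S :: "nat set set" and Sj :: "nat set" and i :: nat
  assumes "monomial_model Y k A \<theta> S"
    and "E \<subseteq> Y"
    and "Sj \<in> S" and "i \<in> Sj"
    and "\<forall>y\<in>E. (\<Sum>l\<in>Sj. A y l) \<le> 1"
    and "lin_cov_scheme \<theta> Sj i \<gamma> \<delta>"
  shows "\<exists>a b :: real. \<forall>t\<in>{0<..<1}.
           mono_event_prob k A (lin_cov \<theta> Sj i \<gamma> \<delta> t) E = a * t + b"
proof -
  have "Sj \<subseteq> {..<k}"
    using assms(1,3) unfolding monomial_model_def is_partition_def by blast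
  then have "finite Sj" by (rule finite_subset) simp
  have "affine_fun (\<lambda>t. mono_prob k A (lin_cov \<theta> Sj i \<gamma> \<delta> t) y)" if "y \<in> E" for y
    using \<open>finite Sj\<close> assms(5) that affine_fun_lin_cov lin_cov_outside_block[OF assms(4)]
    by (intro affine_fun_mono_prob[where \<theta>\<^sub>0 = \<theta>]) auto
  then have "affine_fun (\<lambda>t. mono_event_prob k A (lin_cov \<theta> Sj i \<gamma> \<delta> t) E)"
    unfolding mono_event_prob_def by (rule affine_fun_sum)
  then show ?thesis unfolding affine_fun_def by blast
qed

end
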